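(* Let $R \neq \epsilon$ be a homogeneous regular expression. Then there exist $\ell \leq \mathrm{rpn}(R)$ log-product expressions $B_1, \dots, B_{\ell}$ such that $R \equiv B_1 + \dots + B_{\ell}$.
   Context: Regular expressions (without star, without $\emptyset$) are built from $\epsilon$ and letters by union and concatenation; $\mathrm{rpn}(R)$ is the number of nodes of the syntax tree of $R$; $R\equiv R'$ means they describe the same language. A homogeneous expression describes a language all of whose words have the same length, its degree $\deg R$. A homogeneous expression $B$ is log-product if it is a letter, or there are homogeneous expressions $B_1,B_2$ with $B_1$ log-product, $\deg B_1\ge\deg B_2$ and $B=B_1B_2$ or $B=B_2B_1$. *)

theory Defs
  imports Main
begin

datatype 'a rexp = Eps | Lit 'a | Plus "'a rexp" "'a rexp" | Times "'a rexp" "'a rexp"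

fun lang :: "'a rexp \<Rightarrow> 'a list set" where
  "lang Eps = {[]}"
| "lang (Lit a) = {[a]}"
| "lang (Plus r s) = lang r \<union> lang s"
| "lang (Times r s) = {u @ v | u v. u \<in> lang r \<and> v \<in> lang s}"

fun rpn :: "'a rexp \<Rightarrow> nat" where
  "rpn Eps = 1"
| "rpn (Lit a) = 1"
| "rpn (Plus r s) = 1 + rpn r + rpn s"
| "rpn (Times r s) = 1 + rpn r + rpn s"

definition equiv_rexp :: "'a rexp \<Rightarrow> 'a rexp \<Rightarrow> bool" (infix "\<equiv>\<^sub>r" 50) where
  "r \<equiv>\<^sub>r s \<longleftrightarrow> lang r = lang s"

definition homogeneous :: "'a rexp \<Rightarrow> bool" where
  "homogeneous r \<longleftrightarrow> (\<exists>n. \<forall>w \<in> lang r. length w = n)"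

definition deg :: "'a rexp \<Rightarrow> nat" where
  "deg r = (THE n. \<forall>w \<in> lang r. length w = n)"

inductive log_product :: "'a rexp \<Rightarrow> bool" where
  lit: "log_product (Lit a)"
| left: "\<lbrakk>log_product B1; homogeneous B2; deg B1 \<ge> deg B2\<rbrakk> \<Longrightarrow> log_product (Times B1 B2)"
| right: "\<lbrakk>log_product B1; homogeneous B2; deg B1 \<ge> deg B2\<rbrakk> \<Longrightarrow> log_product (Times B2 B1)"

fun sum_rexp :: "'a rexp list \<Rightarrow> 'a rexp" where
  "sum_rexp [] = Eps"
| "sum_rexp [B] = B"
| "sum_rexp (B # Bs) = Plus B (sum_rexp Bs)"

end

theory Submission
  imports Defs
begin

text \<open>A sum of two expressions of degree \<open>n\<close> is decomposed by
  concatenating the decompositions of its summands. For a product \<open>r s\<close> of degrees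
  \<open>a + b = n > 0\<close>, say with \<open>a \<ge> b\<close> (so \<open>a > 0\<close>), decompose \<open>r \<equiv> B\<^sub>1 + \<dots> + B\<^sub>k\<close> and distribute:
  \<open>r s \<equiv> B\<^sub>1 s + \<dots> + B\<^sub>k s\<close>, where each \<open>B\<^sub>i s\<close> is log-product because
  \<open>deg B\<^sub>i = a \<ge> b = deg s\<close>.\<close>

definition of_degree :: "nat \<Rightarrow> 'a rexp \<Rightarrow> bool" where
  "of_degree n r \<longleftrightarrow> (\<forall>w \<in> lang r. length w = n)"

lemma lang_nonempty: "lang r \<noteq> {}"
  by (induction r) auto

lemma lang_sum_rexp: "Bs \<noteq> [] \<Longrightarrow> lang (sum_rexp Bs) = (\<Union>B \<in> set Bs. lang B)"
  by (induction Bs rule: sum_rexp.induct) auto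

lemma homogeneous_iff_of_degree: "homogeneous r \<longleftrightarrow> (\<exists>n. of_degree n r)"
  unfolding homogeneous_def of_degree_def ..

lemma deg_eqI:
  assumes "of_degree n r"
  shows "deg r = n"
  unfolding deg_def
proof (rule the_equality)
  show "\<forall>w \<in> lang r. length w = n"
    using assms unfolding of_degree_def .
  fix m assume "\<forall>w \<in> lang r. length w = m"
  moreover obtain w where "w \<in> lang r"
    using lang_nonempty by blast
  ultimately show "m = n"
    using assms unfolding of_degree_def by auto
qed

lemma of_degree_0_iff: "of_degree 0 r \<longleftrightarrow> lang r = {[]}"
  using lang_nonempty[of r] unfolding of_degree_def by auto

lemma of_degree_Plus_iff: "of_degree n (Plus r s) \<longleftrightarrow> of_degree n r \<and> of_degree n s"
  unfolding of_degree_def by auto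

lemma of_degree_TimesI: "of_degree a r \<Longrightarrow> of_degree b s \<Longrightarrow> of_degree (a + b) (Times r s)"
  unfolding of_degree_def by auto

lemma of_degree_TimesE:
  assumes "of_degree n (Times r s)"
  obtains a b where "a + b = n" "of_degree a r" "of_degree b s"
proof -
  obtain u0 v0 where u0: "u0 \<in> lang r" and v0: "v0 \<in> lang s"
    using lang_nonempty by blast
  have "length (u @ v) = n" if "u \<in> lang r" "v \<in> lang s" for u v
  proof -
    have "u @ v \<in> lang (Times r s)"
      using that by auto
    then show ?thesis
      using assms unfolding of_degree_def by blast
  qed
  then have "length u0 + length v0 = n"
    and "of_degree (length u0) r" and "of_degree (length v0) s"
    using u0 v0 unfolding of_degree_def by (metis length_append add_right_cancel add_left_cancel)+
  then show thesis
    using that by blast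
qed

definition log_product_sum :: "nat \<Rightarrow> 'a rexp list \<Rightarrow> 'a rexp \<Rightarrow> bool" where
  "log_product_sum n Bs R \<longleftrightarrow> Bs \<noteq> [] \<and> (\<forall>B \<in> set Bs. log_product B \<and> of_degree n B)
     \<and> lang (sum_rexp Bs) = lang R"

lemma log_product_sum_Plus:
  assumes "log_product_sum n Bs r" and "log_product_sum n Cs s"
  shows "log_product_sum n (Bs @ Cs) (Plus r s)"
  using assms lang_sum_rexp[of Bs] lang_sum_rexp[of Cs] lang_sum_rexp[of "Bs @ Cs"]
  unfolding log_product_sum_def by auto

lemma log_product_sum_Times_left:
  assumes Bs: "log_product_sum a Bs r" and s: "of_degree b s" and "b \<le> a"
  shows "log_product_sum (a + b) (map (\<lambda>B. Times B s) Bs) (Times r s)"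
proof -
  have "log_product (Times B s) \<and> of_degree (a + b) (Times B s)" if "B \<in> set Bs" for B
  proof -
    have "log_product B" "of_degree a B"
      using Bs that unfolding log_product_sum_def by auto
    moreover have "homogeneous s" "deg s \<le> deg B"
      using s \<open>b \<le> a\<close> deg_eqI[OF s] deg_eqI[OF \<open>of_degree a B\<close>] homogeneous_iff_of_degree
      by auto
    ultimately show ?thesis
      using s by (auto intro: log_product.left of_degree_TimesI)
  qed
  moreover have "lang (sum_rexp (map (\<lambda>B. Times B s) Bs)) = lang (Times r s)"
    using Bs lang_sum_rexp[of Bs] lang_sum_rexp[of "map (\<lambda>B. Times B s) Bs"]
    unfolding log_product_sum_def by auto
  ultimately show ?thesis
    using Bs unfolding log_product_sum_def by auto
qed

lemma log_product_sum_Times_right: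
  assumes r: "of_degree a r" and Bs: "log_product_sum b Bs s" and "a \<le> b"
  shows "log_product_sum (a + b) (map (Times r) Bs) (Times r s)"
proof -
  have "log_product (Times r B) \<and> of_degree (a + b) (Times r B)" if "B \<in> set Bs" for B
  proof -
    have "log_product B" "of_degree b B"
      using Bs that unfolding log_product_sum_def by auto
    moreover have "homogeneous r" "deg r \<le> deg B"
      using r \<open>a \<le> b\<close> deg_eqI[OF r] deg_eqI[OF \<open>of_degree b B\<close>] homogeneous_iff_of_degree
      by auto
    ultimately show ?thesis
      using r by (auto intro: log_product.right of_degree_TimesI)
  qed
  moreover have "lang (sum_rexp (map (Times r) Bs)) = lang (Times r s)"
    using Bs lang_sum_rexp[of Bs] lang_sum_rexp[of "map (Times r) Bs"]
    unfolding log_product_sum_def by auto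
  ultimately show ?thesis
    using Bs unfolding log_product_sum_def by auto
qed

lemma log_product_sum_exists:
  "of_degree n R \<Longrightarrow> 0 < n \<Longrightarrow> \<exists>Bs. length Bs \<le> rpn R \<and> log_product_sum n Bs R"
proof (induction R arbitrary: n)
  case Eps
  then show ?case
    by (simp add: of_degree_def)
next
  case (Lit x)
  then have "of_degree n (Lit x)"
    by simp
  then have "log_product_sum n [Lit x] (Lit x)"
    unfolding log_product_sum_def by (auto intro: log_product.lit)
  then show ?case
    by (intro exI[of _ "[Lit x]"]) simp
next
  case (Plus r s)
  then obtain Bs Cs where "length Bs \<le> rpn r" "log_product_sum n Bs r"
    and "length Cs \<le> rpn s" "log_product_sum n Cs s"
    by (meson of_degree_Plus_iff)
  then show ?case
    by (intro exI[of _ "Bs @ Cs"]) (simp add: log_product_sum_Plus)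
next
  case (Times r s)
  obtain a b where n: "a + b = n" and r: "of_degree a r" and s: "of_degree b s"
    using Times.prems(1) by (rule of_degree_TimesE)
  show ?case
  proof (cases "b \<le> a")
    case True
    with Times.IH(1)[OF r] n \<open>0 < n\<close> obtain Bs where "length Bs \<le> rpn r" "log_product_sum a Bs r"
      by auto
    with s True n show ?thesis
      by (intro exI[of _ "map (\<lambda>B. Times B s) Bs"]) (auto dest: log_product_sum_Times_left)
  next
    case False
    with Times.IH(2)[OF s] obtain Bs where "length Bs \<le> rpn s" "log_product_sum b Bs s"
      by auto
    with r False n show ?thesis
      by (intro exI[of _ "map (Times r) Bs"]) (auto dest: log_product_sum_Times_right)
  qed
qed

theorem lemma6p2:
  fixes R :: "'a rexp"
  assumes "homogeneous R"
    and "\<not> (R \<equiv>\<^sub>r Eps)"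
  shows "\<exists>Bs. Bs \<noteq> [] \<and> length Bs \<le> rpn R \<and> (\<forall>B \<in> set Bs. log_product B)
              \<and> R \<equiv>\<^sub>r sum_rexp Bs"
proof -
  obtain n where n: "of_degree n R"
    using assms(1) homogeneous_iff_of_degree by blast
  moreover have "n \<noteq> 0"
    using n assms(2) of_degree_0_iff unfolding equiv_rexp_def by fastforce
  ultimately obtain Bs where "length Bs \<le> rpn R" "log_product_sum n Bs R"
    using log_product_sum_exists by blast
  then show ?thesis
    unfolding log_product_sum_def equiv_rexp_def by metis
qed

end
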